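(* There is an absolute constant $c>0$ such that the following holds. Let $y\ge2$ and let $n$ be a squarefree integer with $P^+(n)\ge y$; write $n=ab$ with $a=n_y$ and $b=n/n_y$. Then $$\Delta(n)\ge c\,\frac{\tau(a)}{\log(ay)}\,D_y(b).$$
   Context: $\tau(n)$ is the number of divisors; $P^+(n)$ the largest prime factor of $n$ ($P^+(1)=1$); $n_y:=\prod_{p\mid n,\,p<y}p$. $\Delta(n):=\max_{u\in\mathbb R}|\{d\mid n: e^u<d\le e^{u+1}\}|$. For $n\ge1$ and real $\vartheta$, $\tau(n,\vartheta):=\sum_{d\mid n}d^{i\vartheta}$, and $$D_y(b):=\int_0^1\frac{|\tau(b,\vartheta/\log y)|^2}{\tau(b)}\,d\vartheta.$$ *)

theory Defs
  imports "HOL-Analysis.Analysis" "HOL-Computational_Algebra.Squarefree"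
begin

definition ndiv :: "nat \<Rightarrow> nat" where
  "ndiv n = card {d. d dvd n}"

definition Pplus :: "nat \<Rightarrow> nat" where
  "Pplus n = (if prime_factors n = {} then 1 else Max (prime_factors n))"

definition nsmooth :: "nat \<Rightarrow> real \<Rightarrow> nat" where
  "nsmooth n y = (\<Prod>p\<in>{p. prime p \<and> p dvd n \<and> real p < y}. p)"

text \<open>Hooley's Delta function (the max over u is attained: values lie in a finite set).\<close>
definition hooley_Delta :: "nat \<Rightarrow> nat" where
  "hooley_Delta n = Max (range (\<lambda>u::real. card {d. d dvd n \<and> exp u < real d \<and> real d \<le> exp (u + 1)}))"

definition tau_twist :: "nat \<Rightarrow> real \<Rightarrow> complex" where
  "tau_twist n \<theta> = (\<Sum>d\<in>{d. d dvd n}. (of_nat d :: complex) powr (\<i> * of_real \<theta>))"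

definition D_y :: "real \<Rightarrow> nat \<Rightarrow> real" where
  "D_y y b = integral {0..1} (\<lambda>\<theta>. (cmod (tau_twist b (\<theta> / ln y)))\<^sup>2 / real (ndiv b))"

end

theory Submission imports Defs begin

text \<open>
Write \<open>L = log y\<close>. Expanding the square, \<open>\<tau>(b) D_y(b)\<close> is a double sum over divisors
\<open>d, e\<close> of \<open>b\<close> of \<open>\<integral>\<^sub>0\<^sup>1 cos (t log(d/e)/L) dt\<close>; damping with the Fejer weight \<open>1 - t/2\<close> on
\<open>[0, 2]\<close> bounds each term by twice \<open>K(log(d/e)/L)\<close> with \<open>K(s) = (sin s / s)\<^sup>2 \<le> min(1, s\<^sup>-\<^sup>2)\<close>.
For fixed \<open>d\<close>, the divisors \<open>e\<close> with \<open>|log(d/e)| \<in> [kL, (k+1)L]\<close> lie in two intervals of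
length \<open>L\<close>; multiplying them by all divisors of the coprime \<open>a\<close> gives \<open>\<tau>(a)\<close> times as many
distinct divisors of \<open>n\<close> in intervals of length \<open>L + log a\<close>, and there are at most
\<open>(L + log a + 2) \<Delta>(n)\<close> of those. Summing \<open>min(1, k\<^sup>-\<^sup>2)\<close> over \<open>k\<close> finishes the proof.
\<close>

lemma tau_twist_eq_sum_cis:
  assumes "n > 0"
  shows "tau_twist n t = (\<Sum>d | d dvd n. cis (t * ln (real d)))"
  unfolding tau_twist_def
proof (rule sum.cong[OF refl])
  fix d assume "d \<in> {d. d dvd n}"
  then have d: "d > 0" using assms by (auto intro: Nat.gr0I)
  have "(of_nat d :: complex) powr (\<i> * of_real t) = exp ((\<i> * of_real t) * of_real (ln (real d)))"
    using d by (simp add: powr_def Ln_of_real)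
  also have "\<dots> = cis (t * ln (real d))" by (simp add: cis_conv_exp mult.assoc)
  finally show "(of_nat d :: complex) powr (\<i> * of_real t) = cis (t * ln (real d))" .
qed

lemma norm_sum_cis_squared:
  fixes f :: "'a \<Rightarrow> real"
  shows "(cmod (\<Sum>d\<in>S. cis (f d)))\<^sup>2 = (\<Sum>d\<in>S. \<Sum>e\<in>S. cos (f d - f e))"
proof -
  have "complex_of_real ((cmod (\<Sum>d\<in>S. cis (f d)))\<^sup>2) = (\<Sum>d\<in>S. cis (f d)) * cnj (\<Sum>d\<in>S. cis (f d))"
    by (rule complex_norm_square)
  also have "\<dots> = (\<Sum>d\<in>S. \<Sum>e\<in>S. cis (f d - f e))"
    by (simp add: sum_product cis_cnj cis_mult)
  finally have "(cmod (\<Sum>d\<in>S. cis (f d)))\<^sup>2 = Re (\<Sum>d\<in>S. \<Sum>e\<in>S. cis (f d - f e))"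
    by (metis Re_complex_of_real)
  also have "\<dots> = (\<Sum>d\<in>S. \<Sum>e\<in>S. cos (f d - f e))" by (simp add: Re_sum)
  finally show ?thesis .
qed

definition sinc_sq :: "real \<Rightarrow> real" where
  "sinc_sq s = (if s = 0 then 1 else (sin s / s)\<^sup>2)"

lemma sinc_sq_le_1: "sinc_sq s \<le> 1"
proof (cases "s = 0")
  case False
  have "(sin s)\<^sup>2 \<le> s\<^sup>2"
    using abs_sin_x_le_abs_x[of s] by (metis abs_ge_zero power2_abs power_mono)
  then show ?thesis using False by (simp add: sinc_sq_def power_divide)
qed (simp add: sinc_sq_def)

lemma sinc_sq_le_inverse_square: "s \<noteq> 0 \<Longrightarrow> sinc_sq s \<le> 1 / s\<^sup>2"
  by (simp add: sinc_sq_def power_divide divide_right_mono abs_square_le_1)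

lemma Fejer_has_integral_sinc_sq:
  "((\<lambda>t. (1 - t/2) * cos (t * s)) has_integral sinc_sq s) {0..2}"
proof (cases "s = 0")
  case True
  have "((\<lambda>t::real. 1 - t/2) has_integral ((\<lambda>t. t - t\<^sup>2/4) 2 - (\<lambda>t. t - t\<^sup>2/4) 0)) {0..2}"
    by (intro fundamental_theorem_of_calculus has_real_derivative_iff_has_vector_derivative[THEN iffD1])
       (auto intro!: derivative_eq_intros)
  then show ?thesis using True by (simp add: sinc_sq_def)
next
  case False
  define F where "F t = (1 - t/2) * sin (t * s) / s - cos (t * s) / (2 * s\<^sup>2)" for t
  have "(F has_real_derivative (1 - t/2) * cos (t * s)) (at t)" for t
    unfolding F_def using False
    by (auto intro!: derivative_eq_intros) (simp_all add: field_simps power2_eq_square eval_nat_numeral)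
  then have "((\<lambda>t. (1 - t/2) * cos (t * s)) has_integral (F 2 - F 0)) {0..2}"
    by (intro fundamental_theorem_of_calculus has_real_derivative_iff_has_vector_derivative[THEN iffD1])
       (auto intro: has_field_derivative_at_within)
  moreover have "F 2 - F 0 = (1 - cos (2 * s)) / (2 * s\<^sup>2)"
    using False by (simp add: F_def field_simps)
  moreover have "\<dots> = sinc_sq s"
    using False by (simp add: sinc_sq_def cos_double_sin power_divide)
  ultimately show ?thesis by simp
qed

lemma integral_norm_sum_cis_squared_le:
  fixes x :: "'a \<Rightarrow> real"
  assumes S: "finite S"
  shows "integral {0..1} (\<lambda>t. (cmod (\<Sum>d\<in>S. cis (t * x d)))\<^sup>2)
           \<le> 2 * (\<Sum>d\<in>S. \<Sum>e\<in>S. sinc_sq (x d - x e))"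
proof -
  define g where "g t = (\<Sum>d\<in>S. \<Sum>e\<in>S. cos (t * (x d - x e)))" for t
  define h where "h t = (1 - t/2) * g t" for t
  have g_eq: "(cmod (\<Sum>d\<in>S. cis (t * x d)))\<^sup>2 = g t" for t
    unfolding norm_sum_cis_squared g_def by (simp add: right_diff_distrib)
  have g_nonneg: "g t \<ge> 0" for t
    using g_eq[of t] by (metis zero_le_power2)
  have g_cont: "continuous_on A g" for A unfolding g_def by (intro continuous_intros)
  then have h_cont: "continuous_on A h" for A unfolding h_def by (intro continuous_intros) auto
  have g_int: "g integrable_on {u..v}" and h_int: "h integrable_on {u..v}"
    and h2_int: "(\<lambda>t. 2 * h t) integrable_on {u..v}" for u v
    using g_cont h_cont by (auto intro!: integrable_continuous_interval continuous_intros)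
  have "(h has_integral (\<Sum>d\<in>S. \<Sum>e\<in>S. sinc_sq (x d - x e))) {0..2}"
    unfolding h_def g_def sum_distrib_left by (intro has_integral_sum S Fejer_has_integral_sinc_sq)
  then have h_integral: "integral {0..2} h = (\<Sum>d\<in>S. \<Sum>e\<in>S. sinc_sq (x d - x e))"
    by (rule integral_unique)
  have "integral {0..1} g \<le> integral {0..1} (\<lambda>t. 2 * h t)"
  proof (rule integral_le[OF g_int h2_int])
    fix t :: real assume "t \<in> {0..1}"
    then have "1 * g t \<le> (2 - t) * g t" by (intro mult_right_mono g_nonneg) auto
    then show "g t \<le> 2 * h t" unfolding h_def by (simp add: algebra_simps)
  qed
  also have "\<dots> = 2 * integral {0..1} h" by simp
  also have "integral {0..1} h \<le> integral {0..2} h"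
  proof -
    have "integral {0..1} h + integral {1..2} h = integral {0..2} h"
      using Henstock_Kurzweil_Integration.integral_combine[of 0 1 2 h] h_int by simp
    moreover have "integral {1..2} h \<ge> 0"
      by (rule integral_nonneg[OF h_int]) (auto simp: h_def g_nonneg)
    ultimately show ?thesis by linarith
  qed
  finally show ?thesis using g_eq h_integral by simp
qed

lemma D_y_eq_integral_norm_sum_cis:
  assumes "b > 0"
  shows "D_y y b = integral {0..1} (\<lambda>t. (cmod (\<Sum>d | d dvd b. cis (t * (ln (real d) / ln y))))\<^sup>2)
                   / real (ndiv b)"
proof -
  have "tau_twist b (t / ln y) = (\<Sum>d | d dvd b. cis (t * (ln (real d) / ln y)))" for t
    unfolding tau_twist_eq_sum_cis[OF assms] by simp
  then show ?thesis unfolding D_y_def by (simp add: integral_divide)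
qed

lemma card_divisors_ln_unit_interval_le:
  assumes "n > 0"
  shows "card {m. m dvd n \<and> u < ln (real m) \<and> ln (real m) \<le> u + 1} \<le> hooley_Delta n"
proof -
  have "{m. m dvd n \<and> u < ln (real m) \<and> ln (real m) \<le> u + 1} =
        {d. d dvd n \<and> exp u < real d \<and> real d \<le> exp (u + 1)}"
  proof (rule Collect_cong)
    fix m
    show "(m dvd n \<and> u < ln (real m) \<and> ln (real m) \<le> u + 1) =
          (m dvd n \<and> exp u < real m \<and> real m \<le> exp (u + 1))"
    proof (cases "m dvd n")
      case True
      then have "real m > 0" using assms by (auto intro: Nat.gr0I)
      then show ?thesis by (metis exp_less_cancel_iff exp_le_cancel_iff exp_ln)
    qed simp
  qed
  moreover have "finite (range (\<lambda>u::real. card {d. d dvd n \<and> exp u < real d \<and> real d \<le> exp (u + 1)}))"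
  proof (rule finite_subset)
    show "range (\<lambda>u::real. card {d. d dvd n \<and> exp u < real d \<and> real d \<le> exp (u + 1)})
            \<subseteq> {..card {d. d dvd n}}"
      using finite_divisors_nat[OF assms] by (auto intro!: card_mono)
  qed simp
  ultimately show ?thesis unfolding hooley_Delta_def by (auto intro!: Max_ge)
qed

lemma card_divisors_ln_interval_le:
  assumes n: "n > 0" and "w \<ge> 0"
  shows "real (card {m. m dvd n \<and> u \<le> ln (real m) \<and> ln (real m) \<le> u + w})
           \<le> (w + 2) * real (hooley_Delta n)"
proof -
  define N where "N = nat \<lceil>w\<rceil> + 1"
  define A where "A j = {m. m dvd n \<and> u - 1 + real j < ln (real m) \<and> ln (real m) \<le> u - 1 + real j + 1}"
    for j :: nat
  have cover: "{m. m dvd n \<and> u \<le> ln (real m) \<and> ln (real m) \<le> u + w} \<subseteq> (\<Union>j<N. A j)"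
  proof
    fix m assume m: "m \<in> {m. m dvd n \<and> u \<le> ln (real m) \<and> ln (real m) \<le> u + w}"
    define j where "j = nat \<lceil>ln (real m) - u\<rceil>"
    have "real j = of_int \<lceil>ln (real m) - u\<rceil>" using m by (simp add: j_def)
    then have "real j - 1 < ln (real m) - u" "ln (real m) - u \<le> real j" by linarith+
    then have "m \<in> A j" using m unfolding A_def by auto
    moreover have "j < N" unfolding j_def N_def using m
      by (simp add: nat_le_iff ceiling_mono less_Suc_eq_le nat_mono)
    ultimately show "m \<in> (\<Union>j<N. A j)" by blast
  qed
  have "card {m. m dvd n \<and> u \<le> ln (real m) \<and> ln (real m) \<le> u + w} \<le> card (\<Union>j<N. A j)"
    by (rule card_mono[OF _ cover]) (auto intro: finite_subset[OF _ finite_divisors_nat[OF n]] simp: A_def)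
  also have "\<dots> \<le> (\<Sum>j<N. card (A j))" by (rule card_UN_le) simp
  also have "\<dots> \<le> (\<Sum>j<N. hooley_Delta n)"
    by (rule sum_mono) (unfold A_def, rule card_divisors_ln_unit_interval_le[OF n])
  also have "\<dots> = N * hooley_Delta n" by simp
  finally have "real (card {m. m dvd n \<and> u \<le> ln (real m) \<and> ln (real m) \<le> u + w})
                  \<le> real N * real (hooley_Delta n)"
    by (metis of_nat_le_iff of_nat_mult)
  also have "\<dots> \<le> (w + 2) * real (hooley_Delta n)"
  proof (rule mult_right_mono)
    have "real N = of_int \<lceil>w\<rceil> + 1" unfolding N_def using assms(2) by simp
    then show "real N \<le> w + 2" by linarith
  qed simp
  finally show ?thesis .
qed

lemma inj_on_mult_divisors_coprime:
  fixes a b :: nat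
  assumes "coprime a b"
  shows "inj_on (\<lambda>(d, e). d * e) ({d. d dvd b} \<times> {e. e dvd a})"
proof -
  have recover: "gcd (d * e) b = d \<and> gcd (d * e) a = e" if "d dvd b" "e dvd a" for d e
  proof
    have "coprime b e" using assms that(2) by (meson coprime_commute coprime_divisors dvd_refl)
    then have "gcd (d * e) b = gcd d b" by (rule gcd_mult_left_right_cancel)
    then show "gcd (d * e) b = d" using that(1) by (simp add: gcd_nat.absorb1)
    have "coprime a d" using assms that(1) by (meson coprime_divisors dvd_refl)
    then have "gcd (d * e) a = gcd e a" by (metis gcd_mult_left_left_cancel)
    then show "gcd (d * e) a = e" using that(2) by (simp add: gcd_nat.absorb1)
  qed
  show ?thesis
  proof (rule inj_onI, clarsimp)
    fix d e d' e' :: nat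
    assume "d * e = d' * e'" "d dvd b" "e dvd a" "d' dvd b" "e' dvd a"
    then show "d = d' \<and> e = e'" using recover by metis
  qed
qed

lemma card_divisors_ln_interval_mult_ndiv_le:
  assumes n: "n > 0" and ab: "a * b = n" and "coprime a b" and "w \<ge> 0"
  shows "real (card {d. d dvd b \<and> u \<le> ln (real d) \<and> ln (real d) \<le> u + w}) * real (ndiv a)
           \<le> (w + ln (real a) + 2) * real (hooley_Delta n)"
proof -
  have a0: "a > 0" and b0: "b > 0" using n ab by auto
  define T where "T = {d. d dvd b \<and> u \<le> ln (real d) \<and> ln (real d) \<le> u + w}"
  define E where "E = {e. e dvd a}"
  define I where "I = {m. m dvd n \<and> u \<le> ln (real m) \<and> ln (real m) \<le> u + (w + ln (real a))}"
  have "inj_on (\<lambda>(d, e). d * e) (T \<times> E)"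
    by (rule inj_on_subset[OF inj_on_mult_divisors_coprime[OF assms(3)]]) (auto simp: T_def E_def)
  moreover have "(\<lambda>(d, e). d * e) ` (T \<times> E) \<subseteq> I"
  proof clarify
    fix d e assume d: "d \<in> T" and e: "e \<in> E"
    have d0: "d > 0" using d b0 unfolding T_def by (auto intro: Nat.gr0I)
    have e0: "e > 0" and "e \<le> a" using e a0 unfolding E_def by (auto intro: Nat.gr0I dvd_imp_le)
    then have "0 \<le> ln (real e)" "ln (real e) \<le> ln (real a)" by simp_all
    moreover have "ln (real (d * e)) = ln (real d) + ln (real e)" using d0 e0 by (simp add: ln_mult)
    moreover have "d * e dvd n" using d e ab unfolding T_def E_def by (auto intro: mult_dvd_mono)
    ultimately show "d * e \<in> I" using d unfolding T_def I_def by auto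
  qed
  moreover have "finite I" unfolding I_def by (auto intro: finite_subset[OF _ finite_divisors_nat[OF n]])
  ultimately have "card T * card E \<le> card I"
    by (metis card_cartesian_product card_image card_mono)
  then have "real (card T) * real (card E) \<le> real (card I)"
    by (metis of_nat_le_iff of_nat_mult)
  also have "\<dots> \<le> (w + ln (real a) + 2) * real (hooley_Delta n)"
    unfolding I_def by (rule card_divisors_ln_interval_le[OF n]) (use assms(4) a0 in simp)
  finally show ?thesis unfolding T_def E_def ndiv_def .
qed

definition inv_sq_weight :: "nat \<Rightarrow> real" where
  "inv_sq_weight k = (if k = 0 then 1 else 1 / (real k)\<^sup>2)"

lemma inv_sq_weight_nonneg: "inv_sq_weight k \<ge> 0"
  by (simp add: inv_sq_weight_def)

lemma sum_inv_sq_weight_le: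
  assumes "finite F"
  shows "(\<Sum>k\<in>F. inv_sq_weight k) \<le> 3"
proof -
  have telescope: "(\<Sum>k<N + 2. inv_sq_weight k) \<le> 3 - 1 / real (N + 1)" for N
  proof (induction N)
    case 0 then show ?case by (simp add: inv_sq_weight_def eval_nat_numeral)
  next
    case (Suc N)
    have "inv_sq_weight (N + 2) = 1 / (real N + 2)\<^sup>2" by (simp add: inv_sq_weight_def)
    also have "\<dots> \<le> 1 / ((real N + 1) * (real N + 2))"
      by (rule divide_left_mono) (simp_all add: power2_eq_square)
    also have "\<dots> = 1 / real (N + 1) - 1 / real (Suc N + 1)" by (simp add: field_simps)
    finally show ?case using Suc.IH by simp
  qed
  obtain m where "F \<subseteq> {..<m + 2}"
    using finite_nat_bounded[OF assms] by (metis lessThan_subset_iff le_add1 order_trans)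
  then have "(\<Sum>k\<in>F. inv_sq_weight k) \<le> (\<Sum>k<m + 2. inv_sq_weight k)"
    by (intro sum_mono2) (auto simp: inv_sq_weight_nonneg)
  also have "\<dots> \<le> 3" using telescope[of m] by (smt (verit) of_nat_0_le_iff divide_nonneg_nonneg)
  finally show ?thesis .
qed

lemma sinc_sq_le_inv_sq_weight: "sinc_sq s \<le> inv_sq_weight (nat \<lfloor>\<bar>s\<bar>\<rfloor>)"
proof (cases "nat \<lfloor>\<bar>s\<bar>\<rfloor> = 0")
  case True then show ?thesis by (simp add: inv_sq_weight_def sinc_sq_le_1)
next
  case False
  define k where "k = real (nat \<lfloor>\<bar>s\<bar>\<rfloor>)"
  have k: "0 < k" "k \<le> \<bar>s\<bar>" using False unfolding k_def by linarith+
  then have "sinc_sq s \<le> 1 / s\<^sup>2" by (intro sinc_sq_le_inverse_square) auto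
  also have "\<dots> \<le> 1 / k\<^sup>2"
  proof (rule divide_left_mono)
    show "k\<^sup>2 \<le> s\<^sup>2" using power_mono[OF k(2), of 2] k(1) by simp
  qed (use k in auto)
  finally show ?thesis using False by (simp add: inv_sq_weight_def k_def)
qed

lemma card_divisors_ln_dist_floor_mult_ndiv_le:
  assumes n: "n > 0" and ab: "a * b = n" and cop: "coprime a b" and L: "L > 0"
  shows "real (card {e. e dvd b \<and> nat \<lfloor>\<bar>(v - ln (real e)) / L\<bar>\<rfloor> = k}) * real (ndiv a)
           \<le> 2 * ((L + ln (real a) + 2) * real (hooley_Delta n))"
proof -
  have b0: "b > 0" using n ab by auto
  define T1 where "T1 = {e. e dvd b \<and> v - (real k + 1) * L \<le> ln (real e) \<and> ln (real e) \<le> v - (real k + 1) * L + L}"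
  define T2 where "T2 = {e. e dvd b \<and> v + real k * L \<le> ln (real e) \<and> ln (real e) \<le> v + real k * L + L}"
  have "{e. e dvd b \<and> nat \<lfloor>\<bar>(v - ln (real e)) / L\<bar>\<rfloor> = k} \<subseteq> T1 \<union> T2"
  proof
    fix e assume "e \<in> {e. e dvd b \<and> nat \<lfloor>\<bar>(v - ln (real e)) / L\<bar>\<rfloor> = k}"
    then have e: "e dvd b" and k: "nat \<lfloor>\<bar>(v - ln (real e)) / L\<bar>\<rfloor> = k" by auto
    define s where "s = (v - ln (real e)) / L"
    have "real k \<le> \<bar>s\<bar>" "\<bar>s\<bar> \<le> real k + 1" using k unfolding s_def by linarith+
    then have "real k * L \<le> \<bar>s\<bar> * L" "\<bar>s\<bar> * L \<le> (real k + 1) * L"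
      using L by (auto intro: mult_right_mono)
    moreover have "s * L = v - ln (real e)" unfolding s_def using L by simp
    ultimately show "e \<in> T1 \<union> T2" using e unfolding T1_def T2_def
      by (cases "s \<ge> 0") (auto simp: algebra_simps)
  qed
  moreover have "finite T1" "finite T2" unfolding T1_def T2_def
    by (auto intro: finite_subset[OF _ finite_divisors_nat[OF b0]])
  ultimately have "card {e. e dvd b \<and> nat \<lfloor>\<bar>(v - ln (real e)) / L\<bar>\<rfloor> = k} \<le> card T1 + card T2"
    by (meson card_Un_le card_mono finite_UnI order_trans)
  then have "real (card {e. e dvd b \<and> nat \<lfloor>\<bar>(v - ln (real e)) / L\<bar>\<rfloor> = k}) * real (ndiv a)
               \<le> real (card T1) * real (ndiv a) + real (card T2) * real (ndiv a)"
    by (simp flip: distrib_right of_nat_add of_nat_mult)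
  also have "\<dots> \<le> 2 * ((L + ln (real a) + 2) * real (hooley_Delta n))"
    using card_divisors_ln_interval_mult_ndiv_le[OF n ab cop, of L "v - (real k + 1) * L"]
      card_divisors_ln_interval_mult_ndiv_le[OF n ab cop, of L "v + real k * L"] L
    unfolding T1_def T2_def by linarith
  finally show ?thesis .
qed

lemma sum_sinc_sq_divisors_mult_ndiv_le:
  assumes n: "n > 0" and ab: "a * b = n" and cop: "coprime a b" and L: "L > 0"
  shows "(\<Sum>e | e dvd b. sinc_sq ((v - ln (real e)) / L)) * real (ndiv a)
           \<le> 6 * ((L + ln (real a) + 2) * real (hooley_Delta n))"
proof -
  define S where "S = {e. e dvd b}"
  define \<kappa> where "\<kappa> e = nat \<lfloor>\<bar>(v - ln (real e)) / L\<bar>\<rfloor>" for e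
  define M where "M = (L + ln (real a) + 2) * real (hooley_Delta n)"
  have finS: "finite S" unfolding S_def using n ab by (intro finite_divisors_nat) auto
  have "(\<Sum>e\<in>S. sinc_sq ((v - ln (real e)) / L)) \<le> (\<Sum>e\<in>S. inv_sq_weight (\<kappa> e))"
    unfolding \<kappa>_def by (intro sum_mono sinc_sq_le_inv_sq_weight)
  also have "\<dots> = (\<Sum>k\<in>\<kappa> ` S. \<Sum>e | e \<in> S \<and> \<kappa> e = k. inv_sq_weight (\<kappa> e))"
    by (rule sum.image_gen[OF finS])
  also have "\<dots> = (\<Sum>k\<in>\<kappa> ` S. inv_sq_weight k * real (card {e \<in> S. \<kappa> e = k}))"
    by (rule sum.cong[OF refl]) simp
  finally have "(\<Sum>e\<in>S. sinc_sq ((v - ln (real e)) / L)) * real (ndiv a)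
      \<le> (\<Sum>k\<in>\<kappa> ` S. inv_sq_weight k * real (card {e \<in> S. \<kappa> e = k})) * real (ndiv a)"
    by (rule mult_right_mono) simp
  also have "\<dots> = (\<Sum>k\<in>\<kappa> ` S. inv_sq_weight k * (real (card {e \<in> S. \<kappa> e = k}) * real (ndiv a)))"
    by (simp add: sum_distrib_right mult.assoc)
  also have "\<dots> \<le> (\<Sum>k\<in>\<kappa> ` S. inv_sq_weight k * (2 * M))"
    using card_divisors_ln_dist_floor_mult_ndiv_le[OF n ab cop L]
    unfolding S_def \<kappa>_def M_def by (intro sum_mono mult_left_mono inv_sq_weight_nonneg) simp_all
  also have "\<dots> = (\<Sum>k\<in>\<kappa> ` S. inv_sq_weight k) * (2 * M)" by (simp add: sum_distrib_right)
  also have "\<dots> \<le> 3 * (2 * M)"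
  proof (rule mult_right_mono)
    have "real a \<ge> 1" using n ab by (cases a) auto
    then show "0 \<le> 2 * M" unfolding M_def using L by simp
  qed (use sum_inv_sq_weight_le[of "\<kappa> ` S"] finS in simp)
  finally show ?thesis unfolding S_def M_def by simp
qed

lemma ndiv_pos: "n > 0 \<Longrightarrow> ndiv n > 0"
  unfolding ndiv_def by (auto simp: card_gt_0_iff finite_divisors_nat intro!: exI[of _ 1])

lemma D_y_mult_ndiv_le:
  assumes n: "n > 0" and ab: "a * b = n" and cop: "coprime a b" and y: "y > 1"
  shows "D_y y b * real (ndiv a) \<le> 12 * ((ln y + ln (real a) + 2) * real (hooley_Delta n))"
proof -
  have b0: "b > 0" using n ab by auto
  define L where "L = ln y"
  define M where "M = (L + ln (real a) + 2) * real (hooley_Delta n)"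
  define x where "x d = ln (real d) / L" for d :: nat
  define K where "K d = (\<Sum>e | e dvd b. sinc_sq ((ln (real d) - ln (real e)) / L))" for d :: nat
  have L: "L > 0" unfolding L_def using y by simp
  have "integral {0..1} (\<lambda>t. (cmod (\<Sum>d | d dvd b. cis (t * x d)))\<^sup>2)
          \<le> 2 * (\<Sum>d | d dvd b. \<Sum>e | e dvd b. sinc_sq (x d - x e))"
    using finite_divisors_nat[OF b0] by (rule integral_norm_sum_cis_squared_le)
  then have "D_y y b * real (ndiv b) \<le> 2 * (\<Sum>d | d dvd b. \<Sum>e | e dvd b. sinc_sq (x d - x e))"
    using D_y_eq_integral_norm_sum_cis[OF b0, of y] ndiv_pos[OF b0] unfolding x_def L_def by simp
  then have "D_y y b * real (ndiv b) * real (ndiv a) \<le> 2 * (\<Sum>d | d dvd b. K d) * real (ndiv a)"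
    unfolding K_def x_def diff_divide_distrib by (rule mult_right_mono) simp
  also have "\<dots> = 2 * (\<Sum>d | d dvd b. K d * real (ndiv a))"
    by (simp add: sum_distrib_right)
  also have "\<dots> \<le> 2 * (\<Sum>d | d dvd b. 6 * M)"
    unfolding M_def K_def by (intro mult_left_mono sum_mono sum_sinc_sq_divisors_mult_ndiv_le[OF n ab cop L]) auto
  also have "\<dots> = real (ndiv b) * (12 * M)" by (simp add: ndiv_def)
  finally show ?thesis
    using ndiv_pos[OF b0] unfolding M_def L_def by (simp add: mult.commute mult.left_commute)
qed

lemma squarefree_mult_imp_coprime:
  fixes a b :: "'a :: semiring_gcd"
  assumes "squarefree (a * b)"
  shows "coprime a b"
proof -
  have "(gcd a b)\<^sup>2 dvd a * b" by (simp add: power2_eq_square mult_dvd_mono)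
  then show ?thesis using assms squarefreeD by (metis is_unit_gcd)
qed

lemma prod_primes_dvd:
  fixes n :: nat
  assumes "finite P" "\<And>p. p \<in> P \<Longrightarrow> prime p \<and> p dvd n"
  shows "(\<Prod>p\<in>P. p) dvd n"
  using assms
proof (induction P rule: finite_induct)
  case (insert q F)
  have q: "prime q" "q dvd n" using insert.prems by auto
  have "\<not> q dvd (\<Prod>p\<in>F. p)"
  proof
    assume "q dvd (\<Prod>p\<in>F. p)"
    then obtain r where "r \<in> F" "q dvd r" using prime_dvd_prod_iff[OF insert.hyps(1) q(1)] by auto
    moreover have "prime r" using insert.prems \<open>r \<in> F\<close> by auto
    ultimately show False using q(1) insert.hyps(2) by (metis primes_dvd_imp_eq)
  qed
  then have "coprime q (\<Prod>p\<in>F. p)" using q(1) by (simp add: prime_imp_coprime)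
  then show ?case using insert q(2) by (simp add: divides_mult)
qed simp

lemma nsmooth_dvd: "n > 0 \<Longrightarrow> nsmooth n y dvd n"
  unfolding nsmooth_def
  by (rule prod_primes_dvd) (auto intro: finite_subset[OF _ finite_divisors_nat])

theorem lemma3p2:
  "\<exists>c::real. c > 0 \<and>
     (\<forall>(y::real) (n::nat). y \<ge> 2 \<longrightarrow> squarefree n \<longrightarrow> real (Pplus n) \<ge> y \<longrightarrow>
        (let a = nsmooth n y; b = n div nsmooth n y in
          real (hooley_Delta n) \<ge> c * real (ndiv a) / ln (real a * y) * D_y y b))"
proof (intro exI[of _ "1/48"] conjI allI impI)
  fix y :: real and n :: nat
  assume y: "y \<ge> 2" and sq: "squarefree n" and "real (Pplus n) \<ge> y"
    \<comment> \<open>only guarantees \<open>b > 1\<close>; the bound holds for every squarefree \<open>n\<close>\<close>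
  define a where "a = nsmooth n y"
  define b where "b = n div a"
  have n: "n > 0" using sq by (auto intro: Nat.gr0I)
  then have ab: "a * b = n" unfolding a_def b_def by (simp add: nsmooth_dvd)
  then have "coprime a b" and a: "real a \<ge> 1" using n sq by (auto intro: squarefree_mult_imp_coprime Suc_leI)
  have "ln y \<ge> 2/3" using ln2_ge_two_thirds y by (smt (verit) ln_le_cancel_iff)
  moreover have "ln (real a * y) = ln (real a) + ln y" using a y by (simp add: ln_mult)
  moreover have "ln (real a) \<ge> 0" using a by simp
  ultimately have "ln y + ln (real a) + 2 \<le> 4 * ln (real a * y)" and L: "ln (real a * y) > 0" by linarith+
  have "D_y y b * real (ndiv a) \<le> 12 * ((ln y + ln (real a) + 2) * real (hooley_Delta n))"
    using D_y_mult_ndiv_le[OF n ab \<open>coprime a b\<close>] y by simp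
  also have "\<dots> \<le> 12 * (4 * ln (real a * y) * real (hooley_Delta n))"
    using \<open>ln y + ln (real a) + 2 \<le> 4 * ln (real a * y)\<close> by (intro mult_left_mono mult_right_mono) auto
  finally have "D_y y b * real (ndiv a) \<le> 48 * ln (real a * y) * real (hooley_Delta n)" by simp
  then show "let a = nsmooth n y; b = n div nsmooth n y in
               real (hooley_Delta n) \<ge> 1/48 * real (ndiv a) / ln (real a * y) * D_y y b"
    using L unfolding a_def[symmetric] b_def[symmetric] Let_def by (simp add: field_simps)
qed simp

end
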